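(* Let $A$ be a ring and let $Y$ be an infinite subset of $\operatorname{Spec}(A)$ such that every nonzero element of $A$ belongs to only finitely many prime ideals in $Y$. Then $A$ is an integral domain and $\operatorname{Cl}^c(Y)=Y\cup\{(0)\}$.
   Context: Rings are commutative with identity. The constructible topology on $\operatorname{Spec}(A)$ is the coarsest topology in which every set $D(f)=\{\mathfrak p\in\operatorname{Spec}(A): f\notin\mathfrak p\}$, $f\in A$, is clopen; $\operatorname{Cl}^c(Y)$ denotes closure of $Y$ in this topology. *)

theory Defs
  imports "HOL-Analysis.Analysis" "HOL-Algebra.Algebra"
begin

definition Spec :: "('a, 'b) ring_scheme \<Rightarrow> 'a set set" where
  "Spec R = {P. primeideal P R}"

definition basicD :: "('a, 'b) ring_scheme \<Rightarrow> 'a \<Rightarrow> 'a set set" where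
  "basicD R f = {P \<in> Spec R. f \<notin> P}"

definition constructible_topology :: "('a, 'b) ring_scheme \<Rightarrow> 'a set topology" where
  "constructible_topology R =
     topology_generated_by ({basicD R f | f. f \<in> carrier R} \<union> {Spec R - basicD R f | f. f \<in> carrier R})"

end

theory Submission
  imports Defs
begin

text \<open>Every nonzero element misses all but finitely many primes of the infinite set \<open>Y\<close>, so
  no two nonzero elements can multiply to zero (each prime of \<open>Y\<close> contains one of them);
  hence \<open>A\<close> is a domain and \<open>(0)\<close> is a prime. The sets \<open>D(f)\<close> with \<open>f \<noteq> 0\<close> form a neighbourhood
  basis of \<open>(0)\<close> in the constructible topology, and each meets \<open>Y\<close>, so \<open>(0)\<close> lies in the
  closure. Conversely a prime \<open>Q \<noteq> (0)\<close> contains some \<open>a \<noteq> 0\<close>; its neighbourhood \<open>V(a)\<close> meets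
  \<open>Y\<close> in a finite set, which is closed because the constructible topology is \<open>T\<^sub>1\<close>, so
  \<open>Q\<close> can only be in the closure of \<open>Y\<close> if \<open>Q \<in> Y\<close>.\<close>

lemma (in primeideal) one_notin: "\<one> \<notin> I"
  using I_notcarr one_imp_carrier by blast

lemma Spec_zero_in: "P \<in> Spec R \<Longrightarrow> \<zero>\<^bsub>R\<^esub> \<in> P"
  unfolding Spec_def using additive_subgroup.zero_closed ideal.axioms(1) primeideal.axioms(1)
  by blast

lemma Spec_one_notin: "P \<in> Spec R \<Longrightarrow> \<one>\<^bsub>R\<^esub> \<notin> P"
  unfolding Spec_def by (blast dest: primeideal.one_notin)

lemma Spec_subset_carrier: "P \<in> Spec R \<Longrightarrow> P \<subseteq> carrier R"
  unfolding Spec_def by (blast dest: primeideal.axioms(1) ideal.Icarr)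

lemma basicD_subset_Spec: "basicD R f \<subseteq> Spec R"
  by (auto simp: basicD_def)

lemma basicD_one: "basicD R \<one>\<^bsub>R\<^esub> = Spec R"
  by (auto simp: basicD_def dest: Spec_one_notin)

lemma basicD_zero: "basicD R \<zero>\<^bsub>R\<^esub> = {}"
  by (auto simp: basicD_def dest: Spec_zero_in)

lemma basicD_mult:
  assumes "f \<in> carrier R" and "g \<in> carrier R"
  shows "basicD R (f \<otimes>\<^bsub>R\<^esub> g) = basicD R f \<inter> basicD R g"
proof -
  have "f \<otimes>\<^bsub>R\<^esub> g \<in> P \<longleftrightarrow> f \<in> P \<or> g \<in> P" if "primeideal P R" for P
    using that assms primeideal.I_prime ideal.I_r_closed ideal.I_l_closed primeideal.axioms(1)
    by metis
  then show ?thesis by (auto simp: basicD_def Spec_def)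
qed

lemma topspace_constructible_topology: "topspace (constructible_topology R) = Spec R"
proof -
  have "P \<in> basicD R \<one>\<^bsub>R\<^esub> \<and> \<one>\<^bsub>R\<^esub> \<in> carrier R" if "P \<in> Spec R" for P
    using that basicD_one monoid.one_closed cring.axioms(1) ring.is_monoid primeideal.axioms(2)
    unfolding Spec_def by blast
  then show ?thesis
    by (auto simp: constructible_topology_def basicD_def)
qed

lemma openin_constructible_basicD:
  assumes "f \<in> carrier R"
  shows "openin (constructible_topology R) (basicD R f)"
  unfolding constructible_topology_def
  by (rule topology_generated_by_Basis) (use assms in blast)

lemma closedin_constructible_basicD:
  assumes "f \<in> carrier R"
  shows "closedin (constructible_topology R) (basicD R f)"
proof -
  have "openin (constructible_topology R) (Spec R - basicD R f)"
    unfolding constructible_topology_def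
    by (rule topology_generated_by_Basis) (use assms in blast)
  then show ?thesis
    by (simp add: closedin_def topspace_constructible_topology basicD_subset_Spec)
qed

lemma t1_space_constructible_topology: "t1_space (constructible_topology R)"
  unfolding t1_space_def topspace_constructible_topology
proof (intro ballI impI)
  fix P Q assume P: "P \<in> Spec R" and Q: "Q \<in> Spec R" and "P \<noteq> Q"
  have carr: "P \<subseteq> carrier R" "Q \<subseteq> carrier R"
    using P Q by (simp_all add: Spec_subset_carrier)
  show "\<exists>U. openin (constructible_topology R) U \<and> P \<in> U \<and> Q \<notin> U"
  proof (cases "Q \<subseteq> P")
    case False
    then obtain b where "b \<in> Q" "b \<notin> P" by blast
    moreover have "openin (constructible_topology R) (basicD R b)"
      using carr \<open>b \<in> Q\<close> by (intro openin_constructible_basicD) blast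
    moreover have "P \<in> basicD R b" "Q \<notin> basicD R b"
      using P \<open>b \<in> Q\<close> \<open>b \<notin> P\<close> by (simp_all add: basicD_def)
    ultimately show ?thesis by blast
  next
    case True
    then obtain c where "c \<in> P" "c \<notin> Q" using \<open>P \<noteq> Q\<close> by blast
    moreover have "openin (constructible_topology R) (Spec R - basicD R c)"
      using closedin_constructible_basicD[of c R] carr \<open>c \<in> P\<close>
      by (auto simp: closedin_def topspace_constructible_topology)
    moreover have "P \<in> Spec R - basicD R c" "Q \<notin> Spec R - basicD R c"
      using P \<open>c \<in> P\<close> \<open>c \<notin> Q\<close> by (simp_all add: basicD_def)
    ultimately show ?thesis by blast
  qed
qed

lemma domain_if_nonzero_in_finitely_many_primes:
  fixes A (structure)
  assumes "cring A" and Y: "Y \<subseteq> Spec A" "infinite Y"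
    and fin: "\<forall>a \<in> carrier A. a \<noteq> \<zero> \<longrightarrow> finite {P \<in> Y. a \<in> P}"
  shows "domain A"
proof (rule domainI[OF \<open>cring A\<close>])
  obtain P where "P \<in> Y" using Y(2) by (metis ex_in_conv finite.emptyI)
  then have "\<zero> \<in> P" "\<one> \<notin> P"
    using Y(1) Spec_zero_in Spec_one_notin by blast+
  then show "\<one> \<noteq> \<zero>" by metis
next
  fix a b assume ab: "a \<otimes> b = \<zero>" "a \<in> carrier A" "b \<in> carrier A"
  have "a \<in> P \<or> b \<in> P" if "P \<in> Y" for P
  proof -
    have "primeideal P A" using that Y(1) by (auto simp: Spec_def)
    moreover have "a \<otimes> b \<in> P" using that Y(1) Spec_zero_in ab(1) by auto
    ultimately show ?thesis using primeideal.I_prime ab(2,3) by metis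
  qed
  then have cover: "Y \<subseteq> {P \<in> Y. a \<in> P} \<union> {P \<in> Y. b \<in> P}" by blast
  show "a = \<zero> \<or> b = \<zero>"
  proof (rule ccontr)
    assume "\<not> (a = \<zero> \<or> b = \<zero>)"
    then have "finite ({P \<in> Y. a \<in> P} \<union> {P \<in> Y. b \<in> P})" using fin ab(2,3) by simp
    then show False using cover Y(2) finite_subset by blast
  qed
qed

text \<open>The sets \<open>D(f)\<close>, \<open>f \<noteq> 0\<close>, are closed under finite intersection because \<open>A\<close> is a domain,
  and the only subbasic sets containing \<open>(0)\<close> are \<open>D(f)\<close> with \<open>f \<noteq> 0\<close> and \<open>V(0) = D(1)\<close>.\<close>
lemma zeroideal_constructible_nhds_basicD:
  fixes A (structure)
  assumes "domain A" and "openin (constructible_topology A) U" and "{\<zero>} \<in> U"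
  shows "\<exists>f \<in> carrier A. f \<noteq> \<zero> \<and> basicD A f \<subseteq> U"
proof -
  interpret domain A by fact
  from assms(2) have "generate_topology_on
      ({basicD A f | f. f \<in> carrier A} \<union> {Spec A - basicD A f | f. f \<in> carrier A}) U"
    by (simp add: constructible_topology_def openin_topology_generated_by_iff)
  then show ?thesis using assms(3)
  proof (induction U rule: generate_topology_on.induct)
    case Empty
    then show ?case by simp
  next
    case (Int U V)
    then obtain f g where f: "f \<in> carrier A" "f \<noteq> \<zero>" "basicD A f \<subseteq> U"
      and g: "g \<in> carrier A" "g \<noteq> \<zero>" "basicD A g \<subseteq> V" by auto
    moreover have "f \<otimes> g \<noteq> \<zero>" using integral_iff f g by blast
    ultimately show ?case
      by (intro bexI[of _ "f \<otimes> g"]) (auto simp: basicD_mult)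
  next
    case (UN K)
    then show ?case by blast
  next
    case (Basis U)
    then consider f where "f \<in> carrier A" "U = basicD A f"
      | f where "f \<in> carrier A" "U = Spec A - basicD A f"
      by blast
    then show ?case
    proof cases
      case 1
      then have "f \<noteq> \<zero>" using Basis.prems by (simp add: basicD_def)
      with 1 show ?thesis by blast
    next
      case 2
      then have "f = \<zero>" using Basis.prems by (simp add: basicD_def)
      with 2 have "U = basicD A \<one>" by (simp add: basicD_zero basicD_one)
      then show ?thesis using one_closed one_not_zero by blast
    qed
  qed
qed

lemma zeroideal_in_constructible_closure:
  fixes A (structure)
  assumes "domain A" and Y: "Y \<subseteq> Spec A" "infinite Y"
    and fin: "\<forall>a \<in> carrier A. a \<noteq> \<zero> \<longrightarrow> finite {P \<in> Y. a \<in> P}"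
  shows "{\<zero>} \<in> constructible_topology A closure_of Y"
  unfolding in_closure_of topspace_constructible_topology
proof (intro conjI allI impI)
  show "{\<zero>} \<in> Spec A"
    using domain.zeroprimeideal[OF assms(1)] by (simp add: Spec_def)
  fix U assume "{\<zero>} \<in> U \<and> openin (constructible_topology A) U"
  then obtain f where f: "f \<in> carrier A" "f \<noteq> \<zero>" "basicD A f \<subseteq> U"
    using zeroideal_constructible_nhds_basicD[OF assms(1), of U] by blast
  then have "Y \<noteq> {P \<in> Y. f \<in> P}" using fin Y(2) by force
  then obtain P where "P \<in> Y" "f \<notin> P" by blast
  then have "P \<in> basicD A f" using Y(1) by (auto simp: basicD_def)
  then show "\<exists>P. P \<in> Y \<and> P \<in> U" using f(3) \<open>P \<in> Y\<close> by blast
qed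

lemma constructible_closure_of_subset_Un_zeroideal:
  fixes A (structure)
  assumes Y: "Y \<subseteq> Spec A"
    and fin: "\<forall>a \<in> carrier A. a \<noteq> \<zero> \<longrightarrow> finite {P \<in> Y. a \<in> P}"
  shows "constructible_topology A closure_of Y \<subseteq> Y \<union> {{\<zero>}}"
proof
  let ?X = "constructible_topology A"
  fix Q assume Q: "Q \<in> ?X closure_of Y"
  show "Q \<in> Y \<union> {{\<zero>}}"
  proof (cases "Q = {\<zero>}")
    case False
    have "Q \<in> Spec A" using Q by (simp add: in_closure_of topspace_constructible_topology)
    with False obtain a where a: "a \<in> Q" "a \<noteq> \<zero>"
      using Spec_zero_in by blast
    have a_carr: "a \<in> carrier A" using a(1) Spec_subset_carrier \<open>Q \<in> Spec A\<close> by blast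
    let ?V = "Spec A - basicD A a"
    have "openin ?X ?V"
      using closedin_constructible_basicD[OF a_carr]
      by (simp add: closedin_def topspace_constructible_topology)
    moreover have "Q \<in> ?V" using \<open>Q \<in> Spec A\<close> a(1) by (simp add: basicD_def)
    ultimately have "Q \<in> ?X closure_of (?V \<inter> Y)"
      using openin_Int_closure_of_subset[of ?X ?V Y] Q by blast
    moreover have "?V \<inter> Y = {P \<in> Y. a \<in> P}" using Y by (auto simp: basicD_def)
    moreover have "closedin ?X {P \<in> Y. a \<in> P}"
    proof -
      have "finite {P \<in> Y. a \<in> P}" using fin a(2) a_carr by blast
      moreover have "{P \<in> Y. a \<in> P} \<subseteq> topspace ?X"
        using Y by (auto simp: topspace_constructible_topology)
      ultimately show ?thesis
        using t1_space_constructible_topology t1_space_closedin_finite by metis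
    qed
    ultimately show ?thesis by (simp add: closure_of_closedin)
  qed simp
qed

theorem lemma2p9:
  fixes A (structure)
  assumes "cring A"
    and "Y \<subseteq> Spec A"
    and "infinite Y"
    and "\<forall>a \<in> carrier A. a \<noteq> \<zero> \<longrightarrow> finite {P \<in> Y. a \<in> P}"
  shows "domain A \<and> constructible_topology A closure_of Y = Y \<union> {{\<zero>}}"
proof
  show dom: "domain A"
    using assms by (rule domain_if_nonzero_in_finitely_many_primes)
  have "Y \<subseteq> (constructible_topology A closure_of Y)"
    using assms(2) by (simp add: closure_of_subset topspace_constructible_topology)
  moreover have "{\<zero>} \<in> constructible_topology A closure_of Y"
    using dom assms(2-4) by (rule zeroideal_in_constructible_closure)
  moreover have "(constructible_topology A closure_of Y) \<subseteq> Y \<union> {{\<zero>}}"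
    using assms(2,4) by (rule constructible_closure_of_subset_Un_zeroideal)
  ultimately show "constructible_topology A closure_of Y = Y \<union> {{\<zero>}}" by blast
qed

end
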